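(* Let $V$ be a vertex operator algebra, $\rho:P\to V$ a covering of $V$ in $\mathrm{mod}(V)$, and $p\in P$ a homogeneous element with $\rho(p)=\mathbf{1}$. Then $$\mathrm{Ker}(\rho)=\mathrm{span}_{\mathbb{C}}\{v_np\mid v\in V,\ n\ge0\}.$$
   Context: $\mathrm{mod}(V)$: $\mathbb{N}$-graded $V$-modules with composition series of finite length. A surjective $V$-homomorphism $\rho:P\to V$ is a covering if $P$ is the only submodule of $P$ mapping onto $V$. For $v\in V$, $v_n$ denotes the coefficient of $z^{-n-1}$ in the vertex operator $Y^P(v,z)$ on $P$. *)

theory Defs
  imports Complex_Main
begin

(* The vertex operator
   Y(u,z) = sum_n u_n z^{-n-1} is encoded by its coefficients:
   Y u n w = u_n w. *)

record 'v voa =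
  vsc   :: "complex \<Rightarrow> 'v \<Rightarrow> 'v"
  vY    :: "'v \<Rightarrow> int \<Rightarrow> 'v \<Rightarrow> 'v"
  vac   :: 'v
  omega :: 'v
  cc    :: complex
  vgr   :: "int \<Rightarrow> 'v set"

record ('v, 'm) vmod =
  msc :: "complex \<Rightarrow> 'm \<Rightarrow> 'm"
  mY  :: "'v \<Rightarrow> int \<Rightarrow> 'm \<Rightarrow> 'm"
  mgr :: "nat \<Rightarrow> 'm set"

(* sum of a family with finitely many nonzero terms (the sums over i >= 0
   below have finite support by the truncation condition) *)
definition fsum :: "(nat \<Rightarrow> 'a::comm_monoid_add) \<Rightarrow> 'a" where
  "fsum f = sum f {i. f i \<noteq> 0}"

definition direct_sum_decomp :: "(complex \<Rightarrow> 'a::ab_group_add \<Rightarrow> 'a) \<Rightarrow> ('i \<Rightarrow> 'a set) \<Rightarrow> bool" where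
  "direct_sum_decomp sc G \<longleftrightarrow>
     (\<forall>i. module.subspace sc (G i)) \<and>
     (\<forall>x. \<exists>!f. (\<forall>i. f i \<in> G i) \<and> finite {i. f i \<noteq> 0} \<and> x = sum f {i. f i \<noteq> 0})"

(* Jacobi identity, written out coefficientwise (Borcherds identity): the
   coefficient of z0^{-l-1} z1^{-m-1} z2^{-n-1} of the Jacobi identity for
   Y_out(u,z1), Y_out(v,z2), Y_out(Y_in(u,z0)v,z2) applied to w. *)
definition jacobi_coeff ::
  "(complex \<Rightarrow> 'm::ab_group_add \<Rightarrow> 'm) \<Rightarrow> ('v \<Rightarrow> int \<Rightarrow> 'v \<Rightarrow> 'v) \<Rightarrow>
   ('v \<Rightarrow> int \<Rightarrow> 'm \<Rightarrow> 'm) \<Rightarrow> bool" where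
  "jacobi_coeff sc Yin Yout \<longleftrightarrow>
     (\<forall>u v w l m n.
        fsum (\<lambda>i. sc ((of_int m :: complex) gchoose i) (Yout (Yin u (l + int i) v) (m + n - int i) w))
      = fsum (\<lambda>i. sc ((-1) ^ i * ((of_int l :: complex) gchoose i))
                 (Yout u (l + m - int i) (Yout v (n + int i) w)
                  - sc ((-1) powi l) (Yout v (l + n - int i) (Yout u (m + int i) w)))))"

definition is_voa :: "'v::ab_group_add voa \<Rightarrow> bool" where
  "is_voa V \<longleftrightarrow>
     vector_space (vsc V) \<and>
     direct_sum_decomp (vsc V) (vgr V) \<and>
     (\<forall>k. \<exists>B. finite B \<and> vgr V k \<subseteq> module.span (vsc V) B) \<and>
     (\<exists>N. \<forall>k<N. vgr V k = {0}) \<and>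
     (\<forall>n w. Vector_Spaces.linear (vsc V) (vsc V) (\<lambda>u. vY V u n w)) \<and>
     (\<forall>n u. Vector_Spaces.linear (vsc V) (vsc V) (vY V u n)) \<and>
     (\<forall>u w. \<exists>N. \<forall>n\<ge>N. vY V u n w = 0) \<and>
     (\<forall>n w. vY V (vac V) n w = (if n = -1 then w else 0)) \<and>
     (\<forall>u n. n \<ge> 0 \<longrightarrow> vY V u n (vac V) = 0) \<and>
     (\<forall>u. vY V u (-1) (vac V) = u) \<and>
     jacobi_coeff (vsc V) (vY V) (vY V) \<and>
     (\<forall>m n w. vY V (omega V) (m + 1) (vY V (omega V) (n + 1) w)
              - vY V (omega V) (n + 1) (vY V (omega V) (m + 1) w)
            = vsc V (of_int (m - n)) (vY V (omega V) (m + n + 1) w)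
              + (if m + n = 0 then vsc V ((of_int m ^ 3 - of_int m) / 12 * cc V) w else 0)) \<and>
     (\<forall>k. \<forall>v\<in>vgr V k. vY V (omega V) 1 v = vsc V (of_int k) v) \<and>
     (\<forall>u n. vY V (vY V (omega V) 0 u) n = (\<lambda>w. vsc V (- of_int n) (vY V u (n - 1) w)))"

definition is_Nmod :: "'v::ab_group_add voa \<Rightarrow> ('v, 'm::ab_group_add) vmod \<Rightarrow> bool" where
  "is_Nmod V M \<longleftrightarrow>
     vector_space (msc M) \<and>
     direct_sum_decomp (msc M) (mgr M) \<and>
     (\<forall>n w. Vector_Spaces.linear (vsc V) (msc M) (\<lambda>u. mY M u n w)) \<and>
     (\<forall>n u. Vector_Spaces.linear (msc M) (msc M) (mY M u n)) \<and>
     (\<forall>u w. \<exists>N. \<forall>n\<ge>N. mY M u n w = 0) \<and>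
     (\<forall>n w. mY M (vac V) n w = (if n = -1 then w else 0)) \<and>
     jacobi_coeff (msc M) (vY V) (mY M) \<and>
     (\<forall>k u j m w. u \<in> vgr V k \<longrightarrow> w \<in> mgr M j \<longrightarrow>
        (if int j + k - m - 1 \<ge> 0 then mY M u m w \<in> mgr M (nat (int j + k - m - 1))
         else mY M u m w = 0))"

definition is_submod :: "('v, 'm::ab_group_add) vmod \<Rightarrow> 'm set \<Rightarrow> bool" where
  "is_submod M S \<longleftrightarrow>
     module.subspace (msc M) S \<and>
     (\<forall>u n w. w \<in> S \<longrightarrow> mY M u n w \<in> S) \<and>
     (\<forall>w\<in>S. \<exists>f. (\<forall>i. f i \<in> mgr M i \<inter> S) \<and> finite {i. f i \<noteq> 0} \<and> w = sum f {i. f i \<noteq> 0})"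

definition has_comp_series :: "('v, 'm::ab_group_add) vmod \<Rightarrow> bool" where
  "has_comp_series M \<longleftrightarrow>
     (\<exists>Ss. Ss \<noteq> [] \<and> hd Ss = {0} \<and> last Ss = UNIV \<and>
        (\<forall>S\<in>set Ss. is_submod M S) \<and>
        (\<forall>i. Suc i < length Ss \<longrightarrow> Ss ! i \<subset> Ss ! Suc i \<and>
            \<not> (\<exists>U. is_submod M U \<and> Ss ! i \<subset> U \<and> U \<subset> Ss ! Suc i)))"

definition in_modV :: "'v::ab_group_add voa \<Rightarrow> ('v, 'm::ab_group_add) vmod \<Rightarrow> bool" where
  "in_modV V M \<longleftrightarrow> is_Nmod V M \<and> has_comp_series M"

definition adjoint_mod :: "'v voa \<Rightarrow> ('v, 'v) vmod" where
  "adjoint_mod V = \<lparr>msc = vsc V, mY = vY V, mgr = (\<lambda>n. vgr V (int n))\<rparr>"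

definition is_vhom :: "('v, 'm::ab_group_add) vmod \<Rightarrow> ('v, 'n::ab_group_add) vmod \<Rightarrow> ('m \<Rightarrow> 'n) \<Rightarrow> bool" where
  "is_vhom M N f \<longleftrightarrow> Vector_Spaces.linear (msc M) (msc N) f \<and>
     (\<forall>u n w. f (mY M u n w) = mY N u n (f w))"

definition is_covering :: "('v, 'm::ab_group_add) vmod \<Rightarrow> ('v, 'n::ab_group_add) vmod \<Rightarrow> ('m \<Rightarrow> 'n) \<Rightarrow> bool" where
  "is_covering P N f \<longleftrightarrow> is_vhom P N f \<and> surj f \<and>
     (\<forall>S. is_submod P S \<longrightarrow> f ` S = UNIV \<longrightarrow> S = UNIV)"

end

theory Submission
  imports Defs
begin

text \<open>The span \<open>S\<close> of all modes \<open>v\<^sub>n p\<close> (\<open>n \<in> \<int>\<close>) is a submodule: by the Jacobi identity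
  \<open>u\<^sub>a v\<^sub>b p\<close> is a linear combination of modes of \<open>p\<close>, and \<open>S\<close> is graded because \<open>p\<close> is
  homogeneous. Since \<open>\<rho>(v\<^sub>-\<^sub>1 p) = v\<^sub>-\<^sub>1 \<one> = v\<close>, the covering property forces \<open>S = P\<close>.
  Now the linear map \<open>x \<mapsto> x - (\<rho> x)\<^sub>-\<^sub>1 p\<close> fixes \<open>v\<^sub>n p\<close> for \<open>n \<ge> 0\<close> (as \<open>v\<^sub>n \<one> = 0\<close>)
  and kills it for \<open>n < 0\<close> (as \<open>(v\<^sub>n \<one>)\<^sub>-\<^sub>1 = v\<^sub>n\<close>), so it maps \<open>P = S\<close> into the span \<open>W\<close> of
  the nonnegative modes; on \<open>Ker \<rho>\<close> it is the identity, whence \<open>Ker \<rho> \<subseteq> W \<subseteq> Ker \<rho>\<close>.\<close>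

lemma fsum_eq_sum_lessThan:
  assumes "\<And>i. i \<ge> K \<Longrightarrow> f i = 0"
  shows "fsum f = sum f {..<K}"
proof -
  have "{i. f i \<noteq> 0} \<subseteq> {..<K}"
    using assms by (auto simp: not_le[symmetric])
  then show ?thesis
    unfolding fsum_def by (intro sum.mono_neutral_left) auto
qed

lemma (in module) subspace_fsum:
  "subspace S \<Longrightarrow> (\<And>i. f i \<in> S) \<Longrightarrow> fsum f \<in> S"
  unfolding fsum_def by (rule subspace_sum)

locale vertex_action = vector_space sc
  for sc :: "complex \<Rightarrow> 'm::ab_group_add \<Rightarrow> 'm" +
  fixes Yin :: "'v \<Rightarrow> int \<Rightarrow> 'v \<Rightarrow> 'v"
    and Y :: "'v \<Rightarrow> int \<Rightarrow> 'm \<Rightarrow> 'm"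
  assumes jacobi: "jacobi_coeff sc Yin Y"
    and linear_Y: "Vector_Spaces.linear sc sc (Y u n)"
    and truncation: "\<exists>N. \<forall>n\<ge>N. Y u n w = 0"
begin

abbreviation modes :: "'m \<Rightarrow> 'm set" where
  "modes w \<equiv> {Y x n w | x n. True}"

lemma Y_zero [simp]: "Y u n 0 = 0"
proof -
  interpret Vector_Spaces.linear sc sc "Y u n" by (rule linear_Y)
  show ?thesis by (rule zero)
qed

lemma jacobi_identity:
  "fsum (\<lambda>i. sc (of_int m gchoose i) (Y (Yin u (l + int i) v) (m + n - int i) w))
 = fsum (\<lambda>i. sc ((-1) ^ i * (of_int l gchoose i))
      (Y u (l + m - int i) (Y v (n + int i) w)
       - sc ((-1) powi l) (Y v (l + n - int i) (Y u (m + int i) w))))"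
  using jacobi unfolding jacobi_coeff_def by blast

lemma Y_vacuum_mode:
  assumes vacuum: "\<And>n w. Y e n w = (if n = -1 then w else 0)"
    and "l < 0"
  shows "Y (Yin u l e) (-1) w = Y u l w"
proof -
  have "Y (Yin u l e) (-1) w
      = fsum (\<lambda>i. sc (of_int 0 gchoose i) (Y (Yin u (l + int i) e) (0 + -1 - int i) w))"
    by (subst fsum_eq_sum_lessThan[of 1]) (auto simp: gbinomial_0_left)
  also have "\<dots> = fsum (\<lambda>i. sc ((-1) ^ i * (of_int l gchoose i))
      (Y u (l + 0 - int i) (Y e (-1 + int i) w)
       - sc ((-1) powi l) (Y e (l + -1 - int i) (Y u (0 + int i) w))))"
    by (rule jacobi_identity)
  also have "\<dots> = Y u l w"
    using \<open>l < 0\<close> by (subst fsum_eq_sum_lessThan[of 1]) (auto simp: vacuum)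
  finally show ?thesis .
qed

text \<open>The Jacobi identity with \<open>m\<close> beyond the truncation order of \<open>u\<close> at \<open>w\<close>: its second sum
  vanishes and its left-hand side consists of modes of \<open>w\<close>.\<close>

lemma weighted_modes_sum_in_span:
  "\<exists>c. c 0 = 1 \<and> fsum (\<lambda>i. sc (c i) (Y u (a - int i) (Y v (b + int i) w))) \<in> span (modes w)"
proof -
  obtain N where N: "\<And>n. n \<ge> N \<Longrightarrow> Y u n w = 0"
    using truncation by blast
  define c :: "nat \<Rightarrow> complex" where "c i = (-1) ^ i * (of_int (a - N) gchoose i)" for i
  have "fsum (\<lambda>i. sc (c i) (Y u (a - int i) (Y v (b + int i) w)))
      = fsum (\<lambda>i. sc (of_int N gchoose i) (Y (Yin u (a - N + int i) v) (N + b - int i) w))"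
    using jacobi_identity[of N u "a - N" v b w] by (simp add: N c_def)
  also have "\<dots> \<in> span (modes w)"
    by (intro subspace_fsum span_scale span_base) auto
  finally show ?thesis
    by (intro exI[of _ c]) (simp add: c_def)
qed

lemma Y_Y_in_span_modes: "Y u a (Y v b w) \<in> span (modes w)"
proof -
  obtain N where N: "\<And>n. n \<ge> N \<Longrightarrow> Y v n w = 0"
    using truncation by blast
  show ?thesis
  proof (induction "nat (N - b)" arbitrary: a b rule: less_induct)
    case less
    show ?case
    proof (cases "b \<ge> N")
      case True
      then show ?thesis by (simp add: N span_zero)
    next
      case False
      define t where "t i = Y u (a - int i) (Y v (b + int i) w)" for i
      define K where "K = nat (N - b)"
      obtain c where "c 0 = 1" and c: "fsum (\<lambda>i. sc (c i) (t i)) \<in> span (modes w)"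
        unfolding t_def using weighted_modes_sum_in_span by blast
      have "fsum (\<lambda>i. sc (c i) (t i)) = (\<Sum>i<K. sc (c i) (t i))"
        by (rule fsum_eq_sum_lessThan) (simp add: t_def K_def N)
      also have "\<dots> = t 0 + (\<Sum>i\<in>{1..<K}. sc (c i) (t i))"
        using False \<open>c 0 = 1\<close> by (simp add: K_def lessThan_atLeast0 sum.atLeast_Suc_lessThan)
      finally have t0: "t 0 = fsum (\<lambda>i. sc (c i) (t i)) - (\<Sum>i\<in>{1..<K}. sc (c i) (t i))"
        by (simp add: algebra_simps)
      have "t i \<in> span (modes w)" if "i \<ge> 1" for i
        unfolding t_def using False that by (intro less) auto
      then have "(\<Sum>i\<in>{1..<K}. sc (c i) (t i)) \<in> span (modes w)"
        by (intro span_sum span_scale) auto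
      with c t0 have "t 0 \<in> span (modes w)"
        by (simp add: span_diff)
      then show ?thesis by (simp add: t_def)
    qed
  qed
qed

lemma Y_span_modes: "x \<in> span (modes w) \<Longrightarrow> Y u a x \<in> span (modes w)"
proof -
  interpret Vector_Spaces.linear sc sc "Y u a" by (rule linear_Y)
  have "span (modes w) \<subseteq> {x. Y u a x \<in> span (modes w)}"
  proof (rule span_minimal)
    show "modes w \<subseteq> {x. Y u a x \<in> span (modes w)}"
      using Y_Y_in_span_modes by blast
  qed (simp add: subspace_linear_preimage)
  then show "x \<in> span (modes w) \<Longrightarrow> Y u a x \<in> span (modes w)" by blast
qed

end

text \<open>A subspace \<open>S\<close> is graded by \<open>G\<close> iff \<open>S \<subseteq> homogeneous_sums G S\<close>.\<close>

definition homogeneous_sums :: "(nat \<Rightarrow> 'a set) \<Rightarrow> 'a set \<Rightarrow> 'a::comm_monoid_add set" where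
  "homogeneous_sums G S =
     {x. \<exists>f. (\<forall>i. f i \<in> G i \<inter> S) \<and> finite {i. f i \<noteq> 0} \<and> x = sum f {i. f i \<noteq> 0}}"

lemma sum_in_homogeneous_sums:
  assumes "finite A" "\<And>i. i \<in> A \<Longrightarrow> f i \<in> G i \<inter> S" "\<And>i. 0 \<in> G i \<inter> S"
  shows "sum f A \<in> homogeneous_sums G S"
proof -
  define g where "g i = (if i \<in> A then f i else 0)" for i
  have supp: "{i. g i \<noteq> 0} \<subseteq> A"
    by (auto simp: g_def)
  have "sum f A = sum g A"
    by (simp add: g_def)
  also have "\<dots> = sum g {i. g i \<noteq> 0}"
    by (rule sum.mono_neutral_right[OF \<open>finite A\<close> supp]) auto
  finally show ?thesis
    unfolding homogeneous_sums_def using assms supp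
    by (intro CollectI exI[of _ g]) (auto simp: g_def intro: finite_subset)
qed

lemma (in vector_space) subspace_homogeneous_sums:
  assumes G: "\<And>i. subspace (G i)" and S: "subspace S"
  shows "subspace (homogeneous_sums G S)"
proof -
  have zero: "0 \<in> G i \<inter> S" for i
    using G S by (simp add: subspace_0)
  show ?thesis
  proof (rule subspaceI)
    show "0 \<in> homogeneous_sums G S"
      using sum_in_homogeneous_sums[of "{}" "\<lambda>_. 0" G S] zero by simp
  next
    fix x y assume "x \<in> homogeneous_sums G S" "y \<in> homogeneous_sums G S"
    then obtain f g where f: "\<forall>i. f i \<in> G i \<inter> S" "finite {i. f i \<noteq> 0}" "x = sum f {i. f i \<noteq> 0}"
      and g: "\<forall>i. g i \<in> G i \<inter> S" "finite {i. g i \<noteq> 0}" "y = sum g {i. g i \<noteq> 0}"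
      unfolding homogeneous_sums_def by blast
    define A where "A = {i. f i \<noteq> 0} \<union> {i. g i \<noteq> 0}"
    have "finite A" using f g by (simp add: A_def)
    have "x + y = (\<Sum>i\<in>A. f i + g i)"
      unfolding sum.distrib f(3) g(3) A_def using f(2) g(2)
      by (intro arg_cong2[where f = "(+)"] sum.mono_neutral_left) auto
    also have "\<dots> \<in> homogeneous_sums G S"
      using \<open>finite A\<close> f(1) g(1) zero G S by (intro sum_in_homogeneous_sums) (auto simp: subspace_add)
    finally show "x + y \<in> homogeneous_sums G S" .
  next
    fix c x assume "x \<in> homogeneous_sums G S"
    then obtain f where f: "\<forall>i. f i \<in> G i \<inter> S" "finite {i. f i \<noteq> 0}" "x = sum f {i. f i \<noteq> 0}"
      unfolding homogeneous_sums_def by blast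
    have "scale c x = (\<Sum>i\<in>{i. f i \<noteq> 0}. scale c (f i))"
      by (simp add: f(3) scale_sum_right)
    also have "\<dots> \<in> homogeneous_sums G S"
      using f zero G S by (intro sum_in_homogeneous_sums) (auto simp: subspace_scale)
    finally show "scale c x \<in> homogeneous_sums G S" .
  qed
qed

lemma homogeneous_in_homogeneous_sums:
  assumes "x \<in> G d" "x \<in> S" "\<And>i. 0 \<in> G i \<inter> S"
  shows "x \<in> homogeneous_sums G S"
  using sum_in_homogeneous_sums[of "{d}" "\<lambda>_. x" G S] assms by simp

lemma is_Nmod_vertex_action: "is_Nmod V M \<Longrightarrow> vertex_action (msc M) (vY V) (mY M)"
  unfolding is_Nmod_def vertex_action_def vertex_action_axioms_def by blast

lemma is_Nmod_mode_homogeneous: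
  assumes "is_Nmod V M" "u \<in> vgr V k" "w \<in> mgr M j"
  shows "\<exists>d. mY M u m w \<in> mgr M d"
proof -
  have "vector_space (msc M)" and "module.subspace (msc M) (mgr M 0)"
    using assms(1) unfolding is_Nmod_def direct_sum_decomp_def by blast+
  then have "0 \<in> mgr M 0"
    by (metis module.subspace_0 module_iff_vector_space)
  moreover have "if int j + k - m - 1 \<ge> 0 then mY M u m w \<in> mgr M (nat (int j + k - m - 1))
                 else mY M u m w = 0"
    using assms unfolding is_Nmod_def by blast
  ultimately show ?thesis
    by (metis (full_types))
qed

lemma span_modes_is_submod:
  assumes V: "is_voa V" and P: "is_Nmod V P" and p: "p \<in> mgr P j"
  shows "is_submod P (module.span (msc P) {mY P v n p | v n. True})"
    (is "is_submod P ?S")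
proof -
  interpret vertex_action "msc P" "vY V" "mY P"
    using P by (rule is_Nmod_vertex_action)
  have grading: "\<And>i. subspace (mgr P i)"
    using P unfolding is_Nmod_def direct_sum_decomp_def by blast
  then have zero_homogeneous: "0 \<in> mgr P i \<inter> ?S" for i
    by (simp add: subspace_0 span_zero)
  have "mY P v m p \<in> homogeneous_sums (mgr P) ?S" for v m
  proof -
    obtain f where f: "\<forall>k. f k \<in> vgr V k" "v = sum f {k. f k \<noteq> 0}"
      using V unfolding is_voa_def direct_sum_decomp_def by metis
    interpret mode: Vector_Spaces.linear "vsc V" "msc P" "\<lambda>u. mY P u m p"
      using P unfolding is_Nmod_def by blast
    have "mY P v m p = (\<Sum>k\<in>{k. f k \<noteq> 0}. mY P (f k) m p)"
      unfolding f(2) by (rule mode.sum)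
    also have "\<dots> \<in> homogeneous_sums (mgr P) ?S"
    proof (intro subspace_sum subspace_homogeneous_sums grading)
      fix k
      obtain d where "mY P (f k) m p \<in> mgr P d"
        using is_Nmod_mode_homogeneous[OF P spec[OF f(1), of k] p] by blast
      then show "mY P (f k) m p \<in> homogeneous_sums (mgr P) ?S"
        by (rule homogeneous_in_homogeneous_sums[OF _ span_base zero_homogeneous]) auto
    qed simp
    finally show ?thesis .
  qed
  then have "?S \<subseteq> homogeneous_sums (mgr P) ?S"
    by (intro span_minimal subspace_homogeneous_sums grading) auto
  then show ?thesis
    unfolding is_submod_def homogeneous_sums_def using Y_span_modes by auto
qed

lemma span_nonnegative_modes_subset_kernel:
  assumes V: "is_voa V" and hom: "is_vhom P (adjoint_mod V) \<rho>" and "\<rho> p = vac V"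
  shows "module.span (msc P) {mY P v (int n) p | v n. True} \<subseteq> {x. \<rho> x = 0}"
proof -
  interpret \<rho>: Vector_Spaces.linear "msc P" "vsc V" \<rho>
    using hom unfolding is_vhom_def adjoint_mod_def by simp
  have "\<rho> (mY P v (int n) p) = 0" for v n
    using hom V \<open>\<rho> p = vac V\<close> unfolding is_vhom_def adjoint_mod_def is_voa_def by simp
  then show ?thesis
    by (intro \<rho>.vs1.span_minimal \<rho>.subspace_kernel) auto
qed

lemma kernel_subset_span_nonnegative_modes:
  assumes V: "is_voa V" and P: "is_Nmod V P"
    and hom: "is_vhom P (adjoint_mod V) \<rho>" and "\<rho> p = vac V"
    and generated: "module.span (msc P) {mY P v n p | v n. True} = UNIV"
  shows "{x. \<rho> x = 0} \<subseteq> module.span (msc P) {mY P v (int n) p | v n. True}"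
    (is "_ \<subseteq> ?W")
proof -
  interpret vertex_action "msc P" "vY V" "mY P"
    using P by (rule is_Nmod_vertex_action)
  interpret PP: vector_space_pair "msc P" "msc P" ..
  have lin_\<rho>: "Vector_Spaces.linear (msc P) (vsc V) \<rho>"
    and \<rho>_mode: "\<And>v n. \<rho> (mY P v n p) = vY V v n (vac V)"
    using hom \<open>\<rho> p = vac V\<close> unfolding is_vhom_def adjoint_mod_def by simp_all
  interpret mode: Vector_Spaces.linear "vsc V" "msc P" "\<lambda>u. mY P u (-1) p"
    using P unfolding is_Nmod_def by blast
  define \<phi> where "\<phi> x = x - mY P (\<rho> x) (-1) p" for x
  have "Vector_Spaces.linear (msc P) (msc P) \<phi>"
    unfolding \<phi>_def using Vector_Spaces.linear_compose[OF lin_\<rho> mode.linear_axioms]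
    by (intro PP.linear_compose_sub linear_ident) (simp add: o_def)
  then have "subspace {x. \<phi> x \<in> ?W}"
    by (simp add: PP.linear_subspace_linear_preimage)
  moreover have "\<phi> (mY P v m p) \<in> ?W" for v m
  proof (cases "m \<ge> 0")
    case True
    then have "mY P v m p \<in> ?W"
      by (intro span_base CollectI exI[of _ v] exI[of _ "nat m"]) simp
    then show ?thesis
      using True V by (simp add: \<phi>_def \<rho>_mode is_voa_def mode.zero)
  next
    case False
    have "mY P (vY V v m (vac V)) (-1) p = mY P v m p"
      using False P unfolding is_Nmod_def by (intro Y_vacuum_mode) auto
    then show ?thesis
      by (simp add: \<phi>_def \<rho>_mode span_zero)
  qed
  ultimately have "UNIV \<subseteq> {x. \<phi> x \<in> ?W}"
    unfolding generated[symmetric] by (intro span_minimal) auto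
  then have \<phi>_in_W: "\<phi> x \<in> ?W" for x
    by blast
  show ?thesis
  proof
    fix x assume "x \<in> {x. \<rho> x = 0}"
    then have "\<phi> x = x"
      by (simp add: \<phi>_def mode.zero)
    then show "x \<in> ?W"
      using \<phi>_in_W[of x] by simp
  qed
qed

lemma image_span_modes_eq_UNIV:
  assumes V: "is_voa V" and hom: "is_vhom P (adjoint_mod V) \<rho>" and "\<rho> p = vac V"
  shows "\<rho> ` module.span (msc P) {mY P v n p | v n. True} = UNIV"
proof -
  interpret \<rho>: Vector_Spaces.linear "msc P" "vsc V" \<rho>
    using hom unfolding is_vhom_def adjoint_mod_def by simp
  have "v = \<rho> (mY P v (-1) p)" for v
    using hom V \<open>\<rho> p = vac V\<close> unfolding is_vhom_def adjoint_mod_def is_voa_def by simp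
  moreover have "mY P v (-1) p \<in> \<rho>.vs1.span {mY P v n p | v n. True}" for v
    by (intro \<rho>.vs1.span_base) auto
  ultimately show ?thesis
    by blast
qed

theorem lemma12:
  fixes V :: "'v::ab_group_add voa"
    and P :: "('v, 'p::ab_group_add) vmod"
    and \<rho> :: "'p \<Rightarrow> 'v"
    and p :: 'p
  assumes "is_voa V"
    and "in_modV V (adjoint_mod V)"
    and "in_modV V P"
    and "is_covering P (adjoint_mod V) \<rho>"
    and "\<exists>k. p \<in> mgr P k"
    and "\<rho> p = vac V"
  shows "{x. \<rho> x = 0} = module.span (msc P) {mY P v (int n) p | v n. True}"
proof -
  let ?S = "module.span (msc P) {mY P v n p | v n. True}"
  have P: "is_Nmod V P"
    using assms(3) unfolding in_modV_def by blast
  have hom: "is_vhom P (adjoint_mod V) \<rho>"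
    using assms(4) unfolding is_covering_def by blast
  obtain k where "p \<in> mgr P k"
    using assms(5) by blast
  with assms(1) P have "is_submod P ?S"
    by (rule span_modes_is_submod)
  moreover from assms(1) hom assms(6) have "\<rho> ` ?S = UNIV"
    by (rule image_span_modes_eq_UNIV)
  ultimately have "?S = UNIV"
    using assms(4) unfolding is_covering_def by blast
  with assms(1) P hom assms(6)
  have "{x. \<rho> x = 0} \<subseteq> module.span (msc P) {mY P v (int n) p | v n. True}"
    by (rule kernel_subset_span_nonnegative_modes)
  moreover from assms(1) hom assms(6)
  have "module.span (msc P) {mY P v (int n) p | v n. True} \<subseteq> {x. \<rho> x = 0}"
    by (rule span_nonnegative_modes_subset_kernel)
  ultimately show ?thesis ..
qed

end
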